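(* Let $p$ be any of the following patterns, or any pattern in the same symmetry class as one of them: $(123,\{0,1,2\},\{0,1,2\})$, $(123,\{0,1,2\},\{0,1,3\})$, $(123,\{0,1,2\},\{0,2,3\})$, $(123,\{0,1,2\},\{1,2,3\})$, $(123,\{0,1,3\},\{0,1,3\})$, $(123,\{0,1,3\},\{0,2,3\})$, $(132,\{0,1,2\},\{0,1,2\})$, $(132,\{0,1,2\},\{0,1,3\})$, $(132,\{0,1,2\},\{0,2,3\})$, $(132,\{0,1,2\},\{1,2,3\})$, $(132,\{0,1,3\},\{0,1,3\})$, $(132,\{0,1,3\},\{0,2,3\})$, $(132,\{0,1,3\},\{1,2,3\})$, $(132,\{0,2,3\},\{0,2,3\})$, $(132,\{0,2,3\},\{1,2,3\})$, $(132,\{1,2,3\},\{1,2,3\})$. Then for all $n\ge3$, $a_n(p)=n!-(n-3)!$.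
   Context: For $n\ge1$, $\mathcal S_n$ is the set of permutations $\pi=\pi_1\cdots\pi_n$ of $[n]$. A bi-vincular pattern of length $k$ is a triple $p=(\sigma,X,Y)$ with $\sigma\in\mathcal S_k$ and $X,Y\subseteq\{0,1,\dots,k\}$. A permutation $\pi\in\mathcal S_n$ contains $p$ if there are indices $1\le i_1<\dots<i_k\le n$ such that $(\pi_{i_1},\dots,\pi_{i_k})$ is order-isomorphic to $\sigma$ and, letting $j_1<\dots<j_k$ be the values $\pi_{i_1},\dots,\pi_{i_k}$ sorted increasingly and setting $i_0=j_0=0$, $i_{k+1}=j_{k+1}=n+1$, one has $i_{x+1}=i_x+1$ for all $x\in X$ and $j_{y+1}=j_y+1$ for all $y\in Y$. Otherwise $\pi$ avoids $p$; $a_n(p)$ is the number of $\pi\in\mathcal S_n$ avoiding $p$. Symmetries: $p^{i}=(\sigma^{-1},Y,X)$, $p^{r}=(\sigma^{r},\{k-x:x\in X\},Y)$, $p^{c}=(\sigma^{c},X,\{k-y:y\in Y\})$ with $\sigma^r_j=\sigma_{k+1-j}$, $\sigma^c_j=k+1-\sigma_j$; the symmetry class of $p$ consists of all patterns obtained from $p$ by finitely many applications of these maps. *)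

theory Defs
  imports Main
begin

text \<open>Permutations of [n] are represented as lists of length n (one-line notation,
  1-based values); list position a-1 holds pi_a.\<close>

definition is_perm :: "nat \<Rightarrow> nat list \<Rightarrow> bool" where
  "is_perm n xs \<longleftrightarrow> length xs = n \<and> distinct xs \<and> set xs = {1..n}"

type_synonym bvpattern = "nat list \<times> nat set \<times> nat set"

definition contains :: "nat list \<Rightarrow> bvpattern \<Rightarrow> bool" where
  "contains pi p \<longleftrightarrow>
     (case p of (sigma, X, Y) \<Rightarrow>
       let n = length pi; k = length sigma in
       \<exists>idx :: nat \<Rightarrow> nat.
         (\<forall>a\<in>{1..k}. 1 \<le> idx a \<and> idx a \<le> n) \<and>
         (\<forall>a b. 1 \<le> a \<longrightarrow> a < b \<longrightarrow> b \<le> k \<longrightarrow> idx a < idx b) \<and>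
         (\<forall>a\<in>{1..k}. \<forall>b\<in>{1..k}.
             (pi ! (idx a - 1) < pi ! (idx b - 1)) \<longleftrightarrow> (sigma ! (a - 1) < sigma ! (b - 1))) \<and>
         (let ie = (\<lambda>a. if a = 0 then 0 else if a = k + 1 then n + 1 else idx a);
              js = sorted_list_of_set ((\<lambda>a. pi ! (idx a - 1)) ` {1..k});
              je = (\<lambda>a. if a = 0 then 0 else if a = k + 1 then n + 1 else js ! (a - 1))
          in (\<forall>x\<in>X. ie (x + 1) = ie x + 1) \<and> (\<forall>y\<in>Y. je (y + 1) = je y + 1)))"

definition avoiders :: "nat \<Rightarrow> bvpattern \<Rightarrow> nat" where
  "avoiders n p = card {pi. is_perm n pi \<and> \<not> contains pi p}"

definition perm_inv :: "nat list \<Rightarrow> nat list" where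
  "perm_inv sigma = map (\<lambda>j. Suc (LEAST i. i < length sigma \<and> sigma ! i = j)) [1..<Suc (length sigma)]"

definition pat_i :: "bvpattern \<Rightarrow> bvpattern" where
  "pat_i p = (case p of (sigma, X, Y) \<Rightarrow> (perm_inv sigma, Y, X))"

definition pat_r :: "bvpattern \<Rightarrow> bvpattern" where
  "pat_r p = (case p of (sigma, X, Y) \<Rightarrow> (rev sigma, (\<lambda>x. length sigma - x) ` X, Y))"

definition pat_c :: "bvpattern \<Rightarrow> bvpattern" where
  "pat_c p = (case p of (sigma, X, Y) \<Rightarrow>
     (map (\<lambda>v. length sigma + 1 - v) sigma, X, (\<lambda>y. length sigma - y) ` Y))"

inductive sym_class :: "bvpattern \<Rightarrow> bvpattern \<Rightarrow> bool" for p where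
  refl: "sym_class p p"
| inv: "sym_class p q \<Longrightarrow> sym_class p (pat_i q)"
| rev: "sym_class p q \<Longrightarrow> sym_class p (pat_r q)"
| comp: "sym_class p q \<Longrightarrow> sym_class p (pat_c q)"

definition base_patterns :: "bvpattern set" where
  "base_patterns = {
    ([1,2,3], {0,1,2}, {0,1,2}), ([1,2,3], {0,1,2}, {0,1,3}), ([1,2,3], {0,1,2}, {0,2,3}),
    ([1,2,3], {0,1,2}, {1,2,3}), ([1,2,3], {0,1,3}, {0,1,3}), ([1,2,3], {0,1,3}, {0,2,3}),
    ([1,3,2], {0,1,2}, {0,1,2}), ([1,3,2], {0,1,2}, {0,1,3}), ([1,3,2], {0,1,2}, {0,2,3}),
    ([1,3,2], {0,1,2}, {1,2,3}), ([1,3,2], {0,1,3}, {0,1,3}), ([1,3,2], {0,1,3}, {0,2,3}),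
    ([1,3,2], {0,1,3}, {1,2,3}), ([1,3,2], {0,2,3}, {0,2,3}), ([1,3,2], {0,2,3}, {1,2,3}),
    ([1,3,2], {1,2,3}, {1,2,3})}"

end

theory Submission
  imports Defs "HOL-Combinatorics.Multiset_Permutations"
begin

text \<open>Every listed pattern, and every image of one under inverse, reverse and complement, has a
  permutation of 123 as its underlying permutation and three-element subsets of \<open>{0,1,2,3}\<close> as its
  position and value constraints. Three of the four adjacency requirements along the chain
  \<open>0 = i\<^sub>0 < i\<^sub>1 < i\<^sub>2 < i\<^sub>3 < i\<^sub>4 = n + 1\<close> pin down all three indices, and likewise
  for the values. Hence a permutation contains the pattern iff it has three prescribed values at three
  prescribed positions, which holds for exactly \<open>(n - 3)!\<close> of the \<open>n!\<close> permutations.\<close>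

lemma bij_betw_insert_nth_permutations_of_set:
  assumes "v \<in> A" "i < card A"
  shows "bij_betw (\<lambda>ys. take i ys @ v # drop i ys)
           (permutations_of_set (A - {v})) {xs \<in> permutations_of_set A. xs ! i = v}"
proof (rule bij_betw_byWitness[where f' = "\<lambda>xs. take i xs @ drop (Suc i) xs"])
  have fin: "finite A" using assms(2) card.infinite by fastforce
  have len: "length ys = card A - 1" if "ys \<in> permutations_of_set (A - {v})" for ys
    using length_finite_permutations_of_set[OF that] fin assms(1) by simp
  show "\<forall>ys\<in>permutations_of_set (A - {v}). take i (take i ys @ v # drop i ys) @
          drop (Suc i) (take i ys @ v # drop i ys) = ys"
    using len assms(2) by auto
  show "\<forall>xs\<in>{xs \<in> permutations_of_set A. xs ! i = v}.
          take i (take i xs @ drop (Suc i) xs) @ v # drop i (take i xs @ drop (Suc i) xs) = xs"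
  proof
    fix xs assume "xs \<in> {xs \<in> permutations_of_set A. xs ! i = v}"
    then have xs: "xs \<in> permutations_of_set A" "xs ! i = v" by simp_all
    then have "i < length xs" using assms(2) length_finite_permutations_of_set by metis
    then show "take i (take i xs @ drop (Suc i) xs) @ v # drop i (take i xs @ drop (Suc i) xs) = xs"
      using xs(2) id_take_nth_drop[of i xs] by (simp add: min_def)
  qed
  show "(\<lambda>ys. take i ys @ v # drop i ys) ` permutations_of_set (A - {v})
          \<subseteq> {xs \<in> permutations_of_set A. xs ! i = v}"
  proof clarify
    fix ys assume ys: "ys \<in> permutations_of_set (A - {v})"
    then have "set (take i ys @ drop i ys) = A - {v}" "distinct (take i ys @ drop i ys)"
      by (simp_all add: permutations_of_set_def)
    then show "take i ys @ v # drop i ys \<in> permutations_of_set A \<and> (take i ys @ v # drop i ys) ! i = v"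
      using len[OF ys] assms by (auto simp: permutations_of_set_def nth_append simp del: append_take_drop_id)
  qed
  show "(\<lambda>xs. take i xs @ drop (Suc i) xs) ` {xs \<in> permutations_of_set A. xs ! i = v}
          \<subseteq> permutations_of_set (A - {v})"
  proof (rule image_subsetI)
    fix xs assume "xs \<in> {xs \<in> permutations_of_set A. xs ! i = v}"
    then have xs: "xs \<in> permutations_of_set A" "xs ! i = v" by simp_all
    then have "i < length xs" using assms(2) length_finite_permutations_of_set by metis
    then have "xs = take i xs @ v # drop (Suc i) xs" using xs(2) id_take_nth_drop by metis
    then have "set (take i xs @ v # drop (Suc i) xs) = A" "distinct (take i xs @ v # drop (Suc i) xs)"
      using xs(1) by (metis permutations_of_setD(1), metis permutations_of_setD(2))
    then show "take i xs @ drop (Suc i) xs \<in> permutations_of_set (A - {v})"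
      by (auto simp: permutations_of_set_def)
  qed
qed

lemma card_permutations_of_set_fixed_entries:
  assumes "finite A" "P \<subseteq> {..<card A}" "inj_on f P" "f ` P \<subseteq> A"
  shows "card {xs \<in> permutations_of_set A. \<forall>i\<in>P. xs ! i = f i} = fact (card A - card P)"
proof -
  have "finite P" using assms(2) finite_subset by blast
  then show ?thesis using assms
  \<comment> \<open>Prescribe the largest position last: inserting an entry there does not move the smaller ones.\<close>
  proof (induction P arbitrary: A rule: finite_linorder_max_induct)
    case empty
    then show ?case by simp
  next
    case (insert i P)
    let ?v = "f i" and ?ins = "\<lambda>ys. take i ys @ f i # drop i ys"
    have v: "?v \<in> A" and i: "i < card A" using insert.prems by auto
    have "i \<notin> P" using insert.hyps(2) by blast
    have bij: "bij_betw ?ins (permutations_of_set (A - {?v})) {xs \<in> permutations_of_set A. xs ! i = ?v}"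
      by (rule bij_betw_insert_nth_permutations_of_set[OF v i])
    have below: "?ins ys ! j = ys ! j" if "ys \<in> permutations_of_set (A - {?v})" "j \<in> P" for ys j
      using that insert.hyps(2) length_finite_permutations_of_set[OF that(1)] i v insert.prems(1)
      by (auto simp: nth_append)
    have "{xs \<in> permutations_of_set A. \<forall>j\<in>insert i P. xs ! j = f j}
        = ?ins ` {ys \<in> permutations_of_set (A - {?v}). \<forall>j\<in>P. ys ! j = f j}"
    proof -
      have "{xs \<in> permutations_of_set A. \<forall>j\<in>insert i P. xs ! j = f j}
          = {xs \<in> ?ins ` permutations_of_set (A - {?v}). \<forall>j\<in>P. xs ! j = f j}"
        using bij unfolding bij_betw_def by auto
      then show ?thesis using below by force
    qed
    also have "card \<dots> = card {ys \<in> permutations_of_set (A - {?v}). \<forall>j\<in>P. ys ! j = f j}"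
      by (rule card_image, rule inj_on_subset[OF bij_betw_imp_inj_on[OF bij]]) auto
    also have "\<dots> = fact (card (A - {?v}) - card P)"
    proof (rule insert.IH)
      show "P \<subseteq> {..<card (A - {?v})}" using insert.hyps(2) insert.prems(1) i v by fastforce
      show "f ` P \<subseteq> A - {?v}" using insert.prems(3,4) \<open>i \<notin> P\<close> by (auto simp: inj_on_def)
    qed (use insert.prems in \<open>auto intro: inj_on_subset\<close>)
    also have "\<dots> = fact (card A - card (insert i P))"
      using v insert.prems(1) insert.hyps(1) \<open>i \<notin> P\<close> by simp
    finally show ?case .
  qed
qed

lemma card_permutations_of_set_prescribed_entries:
  assumes "finite A" "inj_on pos I" "pos ` I \<subseteq> {..<card A}" "inj_on val I" "val ` I \<subseteq> A"
  shows "card {xs \<in> permutations_of_set A. \<forall>a\<in>I. xs ! pos a = val a} = fact (card A - card I)"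
proof -
  let ?f = "val \<circ> inv_into I pos"
  have "{xs \<in> permutations_of_set A. \<forall>a\<in>I. xs ! pos a = val a}
      = {xs \<in> permutations_of_set A. \<forall>i\<in>pos ` I. xs ! i = ?f i}"
    using assms(2) by auto
  also have "card \<dots> = fact (card A - card (pos ` I))"
  proof (rule card_permutations_of_set_fixed_entries[OF assms(1,3)])
    show "inj_on ?f (pos ` I)"
      using assms(2,4) by (auto simp: inj_on_def)
    show "?f ` pos ` I \<subseteq> A"
      using assms(2,5) by auto
  qed
  finally show ?thesis using assms(2) by (simp add: card_image)
qed

definition perms3 :: "nat list set" where
  "perms3 = {[1,2,3], [1,3,2], [2,1,3], [2,3,1], [3,1,2], [3,2,1]}"

definition rigid_adjacencies :: "nat set set" where
  "rigid_adjacencies = {{0,1,2}, {0,1,3}, {0,2,3}, {1,2,3}}"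

definition rigid_patterns :: "bvpattern set" where
  "rigid_patterns = {(s, X, Y). s \<in> perms3 \<and> X \<in> rigid_adjacencies \<and> Y \<in> rigid_adjacencies}"

lemma perm_inv_length3:
  assumes "{a, b, c} = {1, 2, 3}"
  shows "perm_inv [a, b, c] = map (\<lambda>j. if a = j then 1 else if b = j then 2 else 3) [1, 2, 3]"
proof -
  have least: "(LEAST i. i < length [a, b, c] \<and> [a, b, c] ! i = j)
      = (if a = j then 0 else if b = j then 1 else 2)"
    if "j \<in> {a, b, c}" for j
    using that by (intro Least_equality) (auto simp: less_Suc_eq numeral_3_eq_3 nth_Cons')
  have "perm_inv [a, b, c] = map (\<lambda>j. Suc (LEAST i. i < length [a, b, c] \<and> [a, b, c] ! i = j)) [1, 2, 3]"
  proof -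
    have "[1..<Suc (length [a, b, c])] = [1, 2, 3]" by (simp add: upt_rec)
    then show ?thesis unfolding perm_inv_def by (simp only:)
  qed
  also have "\<dots> = map (\<lambda>j. if a = j then 1 else if b = j then 2 else 3) [1, 2, 3]"
  proof (rule map_cong[OF HOL.refl])
    fix j :: nat assume "j \<in> set [1, 2, 3]"
    then have "j \<in> {a, b, c}" using assms by simp
    then show "Suc (LEAST i. i < length [a, b, c] \<and> [a, b, c] ! i = j)
        = (if a = j then 1 else if b = j then 2 else 3)"
      by (simp only: least) simp
  qed
  finally show ?thesis .
qed

lemma perm_inv_perms3: "s \<in> perms3 \<Longrightarrow> perm_inv s \<in> perms3"
  unfolding perms3_def by (elim insertE emptyE) (simp_all add: perm_inv_length3 insert_commute)

lemma reflect_rigid_adjacencies: "X \<in> rigid_adjacencies \<Longrightarrow> (\<lambda>x. 3 - x) ` X \<in> rigid_adjacencies"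
  unfolding rigid_adjacencies_def by (elim insertE emptyE) (simp_all add: insert_commute)

lemma pat_i_rigid_patterns: "p \<in> rigid_patterns \<Longrightarrow> pat_i p \<in> rigid_patterns"
  by (auto simp: rigid_patterns_def pat_i_def perm_inv_perms3)

lemma pat_r_rigid_patterns:
  assumes "p \<in> rigid_patterns"
  shows "pat_r p \<in> rigid_patterns"
proof -
  obtain s X Y where p: "p = (s, X, Y)" "s \<in> perms3" "X \<in> rigid_adjacencies" "Y \<in> rigid_adjacencies"
    using assms by (auto simp: rigid_patterns_def)
  moreover have "length s = 3" "rev s \<in> perms3"
    using p(2) by (auto simp: perms3_def)
  ultimately show ?thesis
    by (simp add: rigid_patterns_def pat_r_def reflect_rigid_adjacencies)
qed

lemma pat_c_rigid_patterns:
  assumes "p \<in> rigid_patterns"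
  shows "pat_c p \<in> rigid_patterns"
proof -
  obtain s X Y where p: "p = (s, X, Y)" "s \<in> perms3" "X \<in> rigid_adjacencies" "Y \<in> rigid_adjacencies"
    using assms by (auto simp: rigid_patterns_def)
  moreover have "length s = 3" "map (\<lambda>v. 3 + 1 - v) s \<in> perms3"
    using p(2) by (auto simp: perms3_def)
  ultimately show ?thesis
    by (simp add: rigid_patterns_def pat_c_def reflect_rigid_adjacencies)
qed

lemma sym_class_rigid_patterns: "sym_class q p \<Longrightarrow> q \<in> rigid_patterns \<Longrightarrow> p \<in> rigid_patterns"
  by (induction rule: sym_class.induct)
    (auto intro: pat_i_rigid_patterns pat_r_rigid_patterns pat_c_rigid_patterns)

lemma base_patterns_rigid: "base_patterns \<subseteq> rigid_patterns"
  unfolding base_patterns_def rigid_patterns_def perms3_def rigid_adjacencies_def by auto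

definition order_isomorphic :: "nat \<Rightarrow> (nat \<Rightarrow> nat) \<Rightarrow> nat list \<Rightarrow> bool" where
  "order_isomorphic k w sigma \<longleftrightarrow>
     (\<forall>a\<in>{1..k}. \<forall>b\<in>{1..k}. w a < w b \<longleftrightarrow> sigma ! (a - 1) < sigma ! (b - 1))"

lemma atLeastAtMost_1_3: "{1..3 :: nat} = {1, 2, 3}"
  by auto

lemma order_isomorphic_perms3_iff:
  assumes "s \<in> perms3" "V = [v1, v2, v3]" "v1 < v2" "v2 < v3"
  shows "order_isomorphic 3 w s \<and> w ` {1..3} = set V \<longleftrightarrow>
    (\<forall>a\<in>{1..3}. w a = V ! (s ! (a - 1) - 1))"
proof
  assume iso: "order_isomorphic 3 w s \<and> w ` {1..3} = set V"
  then have "w 1 \<in> {v1, v2, v3}" "w 2 \<in> {v1, v2, v3}" "w 3 \<in> {v1, v2, v3}"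
    unfolding assms(2) by auto
  with assms(1,3,4) iso show "\<forall>a\<in>{1..3}. w a = V ! (s ! (a - 1) - 1)"
    unfolding perms3_def order_isomorphic_def atLeastAtMost_1_3 assms(2)
    by (elim insertE emptyE) auto
next
  assume "\<forall>a\<in>{1..3}. w a = V ! (s ! (a - 1) - 1)"
  with assms(1,3,4) show "order_isomorphic 3 w s \<and> w ` {1..3} = set V"
    unfolding perms3_def order_isomorphic_def atLeastAtMost_1_3 assms(2)
    by (elim insertE emptyE) auto
qed

text \<open>The sentinels \<open>i\<^sub>0 = j\<^sub>0 = 0\<close> and \<open>i\<^sub>k\<^sub>+\<^sub>1 = j\<^sub>k\<^sub>+\<^sub>1 = n + 1\<close>
  of the adjacency conditions.\<close>

definition extend_ends :: "nat \<Rightarrow> nat \<Rightarrow> (nat \<Rightarrow> nat) \<Rightarrow> nat \<Rightarrow> nat" where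
  "extend_ends k n g a = (if a = 0 then 0 else if a = k + 1 then n + 1 else g a)"

definition is_occurrence :: "nat list \<Rightarrow> bvpattern \<Rightarrow> (nat \<Rightarrow> nat) \<Rightarrow> bool" where
  "is_occurrence xs p idx \<longleftrightarrow> (case p of (sigma, X, Y) \<Rightarrow>
     let k = length sigma; n = length xs;
         js = sorted_list_of_set ((\<lambda>a. xs ! (idx a - 1)) ` {1..k})
     in (\<forall>a\<in>{1..k}. 1 \<le> idx a \<and> idx a \<le> n) \<and>
        (\<forall>a b. 1 \<le> a \<longrightarrow> a < b \<longrightarrow> b \<le> k \<longrightarrow> idx a < idx b) \<and>
        order_isomorphic k (\<lambda>a. xs ! (idx a - 1)) sigma \<and>
        (\<forall>x\<in>X. extend_ends k n idx (x + 1) = extend_ends k n idx x + 1) \<and>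
        (\<forall>y\<in>Y. extend_ends k n (\<lambda>a. js ! (a - 1)) (y + 1) = extend_ends k n (\<lambda>a. js ! (a - 1)) y + 1))"

lemma contains_iff_ex_occurrence: "contains xs p \<longleftrightarrow> (\<exists>idx. is_occurrence xs p idx)"
  by (cases p) (simp add: contains_def is_occurrence_def extend_ends_def order_isomorphic_def Let_def)

text \<open>Three of the four conditions \<open>i\<^sub>x\<^sub>+\<^sub>1 = i\<^sub>x + 1\<close> (\<open>x \<in> X\<close>) along
  \<open>0 = i\<^sub>0 < i\<^sub>1 < i\<^sub>2 < i\<^sub>3 < i\<^sub>4 = n + 1\<close> leave a single gap, at the missing \<open>x\<close>.\<close>

definition forced_indices :: "nat set \<Rightarrow> nat \<Rightarrow> nat list" where
  "forced_indices X n =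
     (if 3 \<notin> X then [1, 2, 3] else if 2 \<notin> X then [1, 2, n]
      else if 1 \<notin> X then [1, n - 1, n] else [n - 2, n - 1, n])"

lemma forced_indices_increasing:
  assumes "X \<in> rigid_adjacencies" "3 \<le> n"
  obtains i1 i2 i3 where "forced_indices X n = [i1, i2, i3]" "1 \<le> i1" "i1 < i2" "i2 < i3" "i3 \<le> n"
  using assms(1) unfolding rigid_adjacencies_def
  by (elim insertE emptyE) (use assms(2) that in \<open>auto simp: forced_indices_def\<close>)

lemma adjacency_chain_iff_forced_indices:
  assumes "X \<in> rigid_adjacencies" "3 \<le> n"
  shows "(\<forall>x\<in>X. extend_ends 3 n g (x + 1) = extend_ends 3 n g x + 1) \<longleftrightarrow>
    [g 1, g 2, g 3] = forced_indices X n"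
  using assms(1) unfolding rigid_adjacencies_def
  by (elim insertE emptyE) (use assms(2) in \<open>auto simp: extend_ends_def forced_indices_def numeral_eq_Suc\<close>)

lemma forced_indices_admissible:
  fixes idx :: "nat \<Rightarrow> nat"
  assumes "X \<in> rigid_adjacencies" "3 \<le> n" "[idx 1, idx 2, idx 3] = forced_indices X n"
  shows "(\<forall>a\<in>{1..3}. 1 \<le> idx a \<and> idx a \<le> n) \<and>
    (\<forall>a b. 1 \<le> a \<longrightarrow> a < b \<longrightarrow> b \<le> 3 \<longrightarrow> idx a < idx b)"
proof
  obtain i1 i2 i3 where P: "forced_indices X n = [i1, i2, i3]" "1 \<le> i1" "i1 < i2" "i2 < i3" "i3 \<le> n"
    using forced_indices_increasing[OF assms(1,2)] .
  then have i: "idx 1 = i1" "idx 2 = i2" "idx 3 = i3" using assms(3) by simp_all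
  then show "\<forall>a\<in>{1..3}. 1 \<le> idx a \<and> idx a \<le> n"
    using P(2-5) unfolding atLeastAtMost_1_3 by auto
  show "\<forall>a b. 1 \<le> a \<longrightarrow> a < b \<longrightarrow> b \<le> 3 \<longrightarrow> idx a < idx b"
  proof (intro allI impI)
    fix a b :: nat assume "1 \<le> a" "a < b" "b \<le> 3"
    then have "a = 1 \<and> b = 2 \<or> a = 1 \<and> b = 3 \<or> a = 2 \<and> b = 3" by auto
    then show "idx a < idx b" using i P(3,4) by auto
  qed
qed

lemma list_length_3_conv: "length l = 3 \<Longrightarrow> l = [l ! 0, l ! 1, l ! 2]"
  by (auto simp: numeral_3_eq_3 length_Suc_conv)

lemma value_adjacency_iff_forced_indices:
  fixes w :: "nat \<Rightarrow> nat"
  assumes "Y \<in> rigid_adjacencies" "3 \<le> n" "inj_on w {1..3}"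
  shows "(\<forall>y\<in>Y. extend_ends 3 n (\<lambda>a. sorted_list_of_set (w ` {1..3}) ! (a - 1)) (y + 1)
              = extend_ends 3 n (\<lambda>a. sorted_list_of_set (w ` {1..3}) ! (a - 1)) y + 1)
    \<longleftrightarrow> w ` {1..3} = set (forced_indices Y n)"
proof -
  let ?js = "sorted_list_of_set (w ` {1..3})"
  obtain v1 v2 v3 where V: "forced_indices Y n = [v1, v2, v3]" "v1 < v2" "v2 < v3"
    using forced_indices_increasing[OF assms(1,2)] by metis
  have "length ?js = 3" using assms(3) by (simp add: card_image)
  then have "[?js ! 0, ?js ! 1, ?js ! 2] = ?js"
    by (rule list_length_3_conv[symmetric])
  moreover have "?js = [v1, v2, v3] \<longleftrightarrow> w ` {1..3} = {v1, v2, v3}"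
    using sorted_list_of_set_unique[of "w ` {1..3}" "[v1, v2, v3]"] \<open>length ?js = 3\<close> V(2,3)
    by auto
  ultimately show ?thesis
    using adjacency_chain_iff_forced_indices[OF assms(1,2), of "\<lambda>a. ?js ! (a - 1)"] V(1) by simp
qed

lemma order_isomorphic_inj_on:
  assumes "order_isomorphic k w s" "distinct s" "length s = k"
  shows "inj_on w {1..k}"
proof (rule inj_onI, rule ccontr)
  fix a b assume ab: "a \<in> {1..k}" "b \<in> {1..k}" "w a = w b" "a \<noteq> b"
  then have "s ! (a - 1) \<noteq> s ! (b - 1)" using assms(2,3) by (auto simp: nth_eq_iff_index_eq)
  then show False using assms(1) ab unfolding order_isomorphic_def by (metis less_irrefl linorder_neqE)
qed

lemma order_isomorphic_cong:
  "(\<And>a. a \<in> {1..k} \<Longrightarrow> w a = w' a) \<Longrightarrow> order_isomorphic k w s \<longleftrightarrow> order_isomorphic k w' s"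
  by (simp add: order_isomorphic_def)

lemma rigid_occurrence_iff:
  assumes p: "(s, X, Y) \<in> rigid_patterns" and n: "3 \<le> n" and xs: "length xs = n"
  shows "is_occurrence xs (s, X, Y) idx \<longleftrightarrow> [idx 1, idx 2, idx 3] = forced_indices X n \<and>
    order_isomorphic 3 (\<lambda>a. xs ! (idx a - 1)) s \<and>
    (\<lambda>a. xs ! (idx a - 1)) ` {1..3} = set (forced_indices Y n)"
proof -
  have s: "s \<in> perms3" and X: "X \<in> rigid_adjacencies" and Y: "Y \<in> rigid_adjacencies"
    using p by (auto simp: rigid_patterns_def)
  have ls: "length s = 3" and ds: "distinct s" using s by (auto simp: perms3_def)
  let ?w = "\<lambda>a. xs ! (idx a - 1)"
  let ?js = "sorted_list_of_set (?w ` {1..3})"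
  have value_cond: "(\<forall>y\<in>Y. extend_ends 3 n (\<lambda>a. ?js ! (a - 1)) (y + 1)
                  = extend_ends 3 n (\<lambda>a. ?js ! (a - 1)) y + 1)
      \<longleftrightarrow> ?w ` {1..3} = set (forced_indices Y n)"
    if "order_isomorphic 3 ?w s"
    by (rule value_adjacency_iff_forced_indices[OF Y n order_isomorphic_inj_on[OF that ds ls]])
  show ?thesis
    unfolding is_occurrence_def Let_def ls xs prod.case adjacency_chain_iff_forced_indices[OF X n]
    using forced_indices_admissible[OF X n, of idx] value_cond by blast
qed

lemma contains_rigid_pattern_iff:
  assumes p: "(s, X, Y) \<in> rigid_patterns" and n: "3 \<le> n"
    and xs: "xs \<in> permutations_of_set {1..n}"
  shows "contains xs (s, X, Y) \<longleftrightarrow>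
    (\<forall>a\<in>{1..3}. xs ! (forced_indices X n ! (a - 1) - 1) = forced_indices Y n ! (s ! (a - 1) - 1))"
    (is "_ \<longleftrightarrow> ?fixed_entries")
proof -
  have s: "s \<in> perms3" and X: "X \<in> rigid_adjacencies" and Y: "Y \<in> rigid_adjacencies"
    using p by (auto simp: rigid_patterns_def)
  have lxs: "length xs = n" using xs by (simp add: length_finite_permutations_of_set)
  obtain i1 i2 i3 where P: "forced_indices X n = [i1, i2, i3]"
    using forced_indices_increasing[OF X n] by metis
  obtain v1 v2 v3 where V: "forced_indices Y n = [v1, v2, v3]" "v1 < v2" "v2 < v3"
    using forced_indices_increasing[OF Y n] by metis
  let ?w = "\<lambda>idx a. xs ! (idx a - 1)"
  let ?occurrence = "\<lambda>idx. [idx 1, idx 2, idx 3] = forced_indices X n \<and>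
    order_isomorphic 3 (?w idx) s \<and> ?w idx ` {1..3} = set (forced_indices Y n)"
  define idx0 where "idx0 a = forced_indices X n ! (a - 1)" for a :: nat
  have "contains xs (s, X, Y) \<longleftrightarrow> (\<exists>idx. ?occurrence idx)"
    unfolding contains_iff_ex_occurrence rigid_occurrence_iff[OF p n lxs] ..
  also have "\<dots> \<longleftrightarrow> ?occurrence idx0"
  proof
    assume "\<exists>idx. ?occurrence idx"
    then obtain idx where idx: "?occurrence idx" ..
    have agree: "?w idx a = ?w idx0 a" if "a \<in> {1..3}" for a
      using that idx unfolding atLeastAtMost_1_3 by (auto simp: idx0_def P)
    have "?w idx ` {1..3} = ?w idx0 ` {1..3}"
      by (rule image_cong[OF HOL.refl agree])
    then show "?occurrence idx0"
      using idx order_isomorphic_cong[of 3 "?w idx" "?w idx0", OF agree] by (simp add: idx0_def P)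
  qed blast
  also have "\<dots> \<longleftrightarrow> ?fixed_entries"
    using order_isomorphic_perms3_iff[OF s V, of "?w idx0"] V(1) by (simp add: idx0_def P)
  finally show ?thesis .
qed

lemma card_containing_rigid_pattern:
  assumes p: "p \<in> rigid_patterns" and n: "3 \<le> n"
  shows "card {xs \<in> permutations_of_set {1..n}. contains xs p} = fact (n - 3)"
proof -
  obtain s X Y where p_def: "p = (s, X, Y)" and s: "s \<in> perms3"
    and X: "X \<in> rigid_adjacencies" and Y: "Y \<in> rigid_adjacencies"
    using p by (auto simp: rigid_patterns_def)
  obtain i1 i2 i3 where P: "forced_indices X n = [i1, i2, i3]" "1 \<le> i1" "i1 < i2" "i2 < i3" "i3 \<le> n"
    using forced_indices_increasing[OF X n] .
  obtain v1 v2 v3 where V: "forced_indices Y n = [v1, v2, v3]" "1 \<le> v1" "v1 < v2" "v2 < v3" "v3 \<le> n"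
    using forced_indices_increasing[OF Y n] .
  let ?pos = "\<lambda>a. [i1, i2, i3] ! (a - 1) - 1"
  let ?val = "\<lambda>a. [v1, v2, v3] ! (s ! (a - 1) - 1)"
  have "{xs \<in> permutations_of_set {1..n}. contains xs p}
      = {xs \<in> permutations_of_set {1..n}. \<forall>a\<in>{1..3}. xs ! ?pos a = ?val a}"
    using contains_rigid_pattern_iff[OF p[unfolded p_def] n] P(1) V(1) by (auto simp: p_def)
  also have "card \<dots> = fact (card {1..n} - card {1..3::nat})"
  proof (rule card_permutations_of_set_prescribed_entries)
    show "inj_on ?pos {1..3}" "?pos ` {1..3} \<subseteq> {..<card {1..n}}"
      using P(2-5) unfolding atLeastAtMost_1_3 by (auto simp: inj_on_def)
    show "inj_on ?val {1..3}" "?val ` {1..3} \<subseteq> {1..n}"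
      using s V(2-5) unfolding atLeastAtMost_1_3 perms3_def by (auto simp: inj_on_def)
  qed simp
  finally show ?thesis by simp
qed

lemma is_perm_iff_permutations_of_set: "is_perm n xs \<longleftrightarrow> xs \<in> permutations_of_set {1..n}"
  using distinct_card[of xs] by (auto simp: is_perm_def permutations_of_set_def)

theorem mainTheorem20:
  fixes q p :: bvpattern and n :: nat
  assumes "q \<in> base_patterns" and "sym_class q p" and "n \<ge> 3"
  shows "avoiders n p = fact n - fact (n - 3)"
proof -
  have p: "p \<in> rigid_patterns"
    using sym_class_rigid_patterns[OF assms(2)] base_patterns_rigid assms(1) by blast
  have "{xs. is_perm n xs \<and> \<not> contains xs p}
      = permutations_of_set {1..n} - {xs \<in> permutations_of_set {1..n}. contains xs p}"
    by (auto simp: is_perm_iff_permutations_of_set)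
  then have "avoiders n p
      = card (permutations_of_set {1..n}) - card {xs \<in> permutations_of_set {1..n}. contains xs p}"
    unfolding avoiders_def by (simp add: card_Diff_subset)
  then show ?thesis
    using card_containing_rigid_pattern[OF p assms(3)] by simp
qed

end
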